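(* Let $G\subseteq\mathrm{GL}_n(\mathbb{R})$ be a finite group and $H$ a normal subgroup of $G$. Assume: (1) there are $g_1,\dots,g_k\in\mathbb{R}[\underline{X}]^G$ such that a ring homomorphism $\varphi_G:\mathbb{R}[\underline{X}]^G\to\mathbb{R}$ extends to a ring homomorphism $\mathbb{R}[\underline{X}]^H\to\mathbb{R}$ if and only if $\varphi_G(g_1)\ge0,\dots,\varphi_G(g_k)\ge0$; (2) there is $h\in\mathbb{R}[\underline{X}]^H$ such that a ring homomorphism $\varphi_H:\mathbb{R}[\underline{X}]^H\to\mathbb{R}$ extends to a ring homomorphism $\mathbb{R}[\underline{X}]\to\mathbb{R}$ if and only if $\varphi_H(h)\ge0$. Then a ring homomorphism $\varphi_G:\mathbb{R}[\underline{X}]^G\to\mathbb{R}$ extends to a ring homomorphism $\varphi:\mathbb{R}[\underline{X}]\to\mathbb{R}$ if and only if $\varphi_G(\mathcal{R}_G(h))\ge0$, $\varphi_G(g_1)\ge0,\dots,\varphi_G(g_k)\ge0$.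
   Context: $\mathbb{R}[\underline{X}]=\mathbb{R}[X_1,\dots,X_n]$ with $G$ acting by $h^\sigma(x)=h(\sigma^{-1}x)$; $\mathbb{R}[\underline{X}]^K$ is the ring of $K$-invariant polynomials; $\mathcal{R}_G(h)=\frac{1}{|G|}\sum_{\sigma\in G}h^\sigma$ is the Reynolds operator. *)

theory Defs
  imports "HOL-Analysis.Analysis"
begin

text \<open>The polynomial ring R[X_1,...,X_n] is represented by the ring of polynomial
  functions on R^n (isomorphic to the polynomial ring since R is infinite).\<close>
inductive_set polyfun :: "(real^'n \<Rightarrow> real) set" where
  const: "(\<lambda>x. c) \<in> polyfun"
| coord: "(\<lambda>x. x $ i) \<in> polyfun"
| add: "f \<in> polyfun \<Longrightarrow> g \<in> polyfun \<Longrightarrow> (\<lambda>x. f x + g x) \<in> polyfun"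
| mult: "f \<in> polyfun \<Longrightarrow> g \<in> polyfun \<Longrightarrow> (\<lambda>x. f x * g x) \<in> polyfun"

definition matrix_group :: "(real^'n^'n) set \<Rightarrow> bool" where
  "matrix_group G \<longleftrightarrow> G \<subseteq> {A. invertible A} \<and> mat 1 \<in> G
     \<and> (\<forall>A\<in>G. \<forall>B\<in>G. A ** B \<in> G) \<and> (\<forall>A\<in>G. matrix_inv A \<in> G)"

definition normal_subgroup :: "(real^'n^'n) set \<Rightarrow> (real^'n^'n) set \<Rightarrow> bool" where
  "normal_subgroup H G \<longleftrightarrow> H \<subseteq> G \<and> matrix_group H
     \<and> (\<forall>s\<in>G. \<forall>t\<in>H. s ** t ** matrix_inv s \<in> H)"

definition act :: "real^'n^'n \<Rightarrow> (real^'n \<Rightarrow> real) \<Rightarrow> (real^'n \<Rightarrow> real)" where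
  "act s f = (\<lambda>x. f (matrix_inv s *v x))"

definition inv_ring :: "(real^'n^'n) set \<Rightarrow> (real^'n \<Rightarrow> real) set" where
  "inv_ring K = {f \<in> polyfun. \<forall>s\<in>K. act s f = f}"

definition reynolds :: "(real^'n^'n) set \<Rightarrow> (real^'n \<Rightarrow> real) \<Rightarrow> (real^'n \<Rightarrow> real)" where
  "reynolds G f = (\<lambda>x. (1 / real (card G)) * (\<Sum>s\<in>G. act s f x))"

definition ring_hom_on :: "('a \<Rightarrow> real) set \<Rightarrow> (('a \<Rightarrow> real) \<Rightarrow> real) \<Rightarrow> bool" where
  "ring_hom_on A \<phi> \<longleftrightarrow> \<phi> (\<lambda>x. 1) = 1
     \<and> (\<forall>a\<in>A. \<forall>b\<in>A. \<phi> (\<lambda>x. a x + b x) = \<phi> a + \<phi> b \<and> \<phi> (\<lambda>x. a x * b x) = \<phi> a * \<phi> b)"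

definition extends_hom :: "('a \<Rightarrow> real) set \<Rightarrow> ('a \<Rightarrow> real) set \<Rightarrow> (('a \<Rightarrow> real) \<Rightarrow> real) \<Rightarrow> bool" where
  "extends_hom A B \<phi> \<longleftrightarrow> (\<exists>\<psi>. ring_hom_on B \<psi> \<and> (\<forall>a\<in>A. \<psi> a = \<phi> a))"

end

theory Submission
  imports Defs
begin

text \<open>If \<open>\<Phi>\<close> extends \<open>\<phi>\<close> to \<open>\<real>[X]\<close>, then for every \<open>\<sigma> \<in> G\<close> the restriction
  of \<open>\<Phi> \<circ> \<sigma>\<close> to \<open>\<real>[X]\<^sup>H\<close> extends to \<open>\<real>[X]\<close>, so \<open>\<Phi>(h\<^sup>\<sigma>) \<ge> 0\<close>, and their mean
  \<open>\<phi>(\<R>\<^sub>G(h))\<close> is nonnegative.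
  Conversely, if \<open>\<psi>\<close> extends \<open>\<phi>\<close> to \<open>\<real>[X]\<^sup>H\<close> and \<open>\<phi>(\<R>\<^sub>G(h)) \<ge> 0\<close>, then the
  mean of the \<open>\<psi>(h\<^sup>\<sigma>)\<close> is nonnegative, so \<open>\<psi>(h\<^sup>\<sigma>) \<ge> 0\<close> for some \<open>\<sigma>\<close>. As \<open>H\<close> is
  normal, \<open>\<psi> \<circ> \<sigma>\<close> is again a homomorphism of \<open>\<real>[X]\<^sup>H\<close> extending \<open>\<phi>\<close>; being
  nonnegative at \<open>h\<close>, it extends to \<open>\<real>[X]\<close>.\<close>

lemma matrix_inv_right_left:
  fixes A :: "'a::semiring_1^'n^'n"
  assumes "invertible A"
  shows matrix_inv_right: "A ** matrix_inv A = mat 1"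
    and matrix_inv_left: "matrix_inv A ** A = mat 1"
proof -
  have "\<exists>A'. A ** A' = mat 1 \<and> A' ** A = mat 1"
    using assms unfolding invertible_def by blast
  then have "A ** matrix_inv A = mat 1 \<and> matrix_inv A ** A = mat 1"
    unfolding matrix_inv_def by (rule someI_ex)
  then show "A ** matrix_inv A = mat 1" "matrix_inv A ** A = mat 1" by auto
qed

lemma matrix_inv_unique:
  fixes A B :: "'a::semiring_1^'n^'n"
  assumes "invertible A" "A ** B = mat 1"
  shows "matrix_inv A = B"
proof -
  have "matrix_inv A = matrix_inv A ** (A ** B)" using assms by simp
  also have "\<dots> = (matrix_inv A ** A) ** B" by (simp add: matrix_mul_assoc)
  also have "\<dots> = B" by (simp add: matrix_inv_left[OF assms(1)])
  finally show ?thesis .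
qed

lemma matrix_inv_matrix_inv:
  fixes A :: "'a::semiring_1^'n^'n"
  assumes "invertible A"
  shows "matrix_inv (matrix_inv A) = A"
proof -
  have "invertible (matrix_inv A)"
    using matrix_inv_right_left[OF assms] unfolding invertible_def by blast
  then show ?thesis by (rule matrix_inv_unique) (rule matrix_inv_left[OF assms])
qed

lemma matrix_inv_mult:
  fixes A B :: "'a::semiring_1^'n^'n"
  assumes "invertible A" "invertible B"
  shows "matrix_inv (A ** B) = matrix_inv B ** matrix_inv A"
proof (rule matrix_inv_unique)
  show "invertible (A ** B)" using assms by (rule invertible_mult)
  have "(A ** B) ** (matrix_inv B ** matrix_inv A) = A ** (B ** matrix_inv B) ** matrix_inv A"
    by (simp add: matrix_mul_assoc)
  also have "\<dots> = mat 1"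
    by (simp add: matrix_inv_right[OF assms(1)] matrix_inv_right[OF assms(2)])
  finally show "(A ** B) ** (matrix_inv B ** matrix_inv A) = mat 1" .
qed

lemma matrix_group_inverse:
  assumes "matrix_group G" "s \<in> G"
  shows "invertible s" "matrix_inv s \<in> G"
  using assms unfolding matrix_group_def by auto

lemma act_act:
  assumes "invertible s" "invertible t"
  shows "act t (act s f) = act (t ** s) f"
  by (simp add: act_def matrix_inv_mult[OF assms(2,1)] matrix_vector_mul_assoc)

definition function_subring :: "('a \<Rightarrow> real) set \<Rightarrow> bool" where
  "function_subring A \<longleftrightarrow> (\<forall>c. (\<lambda>x. c) \<in> A) \<and>
     (\<forall>f\<in>A. \<forall>g\<in>A. (\<lambda>x. f x + g x) \<in> A \<and> (\<lambda>x. f x * g x) \<in> A)"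

lemma function_subring_sum:
  assumes "function_subring A" "\<forall>s\<in>S. F s \<in> A"
  shows "(\<lambda>x. \<Sum>s\<in>S. F s x) \<in> A"
proof (cases "finite S")
  case True
  then show ?thesis using assms(2)
    by (induction S rule: finite_induct) (use assms(1) in \<open>auto simp: function_subring_def\<close>)
qed (use assms(1) in \<open>simp add: function_subring_def\<close>)

lemma function_subring_polyfun: "function_subring polyfun"
  unfolding function_subring_def by (auto intro: polyfun.intros)

lemma inv_ring_subset_polyfun: "inv_ring K \<subseteq> polyfun"
  unfolding inv_ring_def by auto

lemma inv_ring_antimono: "K \<subseteq> L \<Longrightarrow> inv_ring L \<subseteq> inv_ring K"
  unfolding inv_ring_def by auto

lemma function_subring_inv_ring: "function_subring (inv_ring K)"
  unfolding function_subring_def inv_ring_def act_def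
  by (auto intro: polyfun.intros simp: fun_eq_iff)

lemma polyfun_act: "f \<in> polyfun \<Longrightarrow> act s f \<in> polyfun"
proof (induction f rule: polyfun.induct)
  case (coord i)
  have "act s (\<lambda>x. x $ i) = (\<lambda>x. \<Sum>j\<in>UNIV. matrix_inv s $ i $ j * x $ j)"
    by (simp add: act_def matrix_vector_mult_def)
  also have "\<dots> \<in> polyfun"
    by (rule function_subring_sum[OF function_subring_polyfun]) (auto intro: polyfun.intros)
  finally show ?case .
qed (simp_all add: act_def polyfun.intros)

lemma act_inv_ring_normal_subgroup:
  assumes "matrix_group G" "normal_subgroup H G" "s \<in> G" "f \<in> inv_ring H"
  shows "act s f \<in> inv_ring H"
proof -
  have "act t (act s f) = act s f" if "t \<in> H" for t
  proof -
    have "H \<subseteq> G" using assms(2) unfolding normal_subgroup_def by auto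
    note s = matrix_group_inverse[OF assms(1,3)]
    have t: "invertible t" using matrix_group_inverse[OF assms(1)] \<open>t \<in> H\<close> \<open>H \<subseteq> G\<close> by auto
    define u where "u = matrix_inv s ** t ** s"
    have "u \<in> H"
      using assms(2) s \<open>t \<in> H\<close> matrix_inv_matrix_inv[OF s(1)]
      unfolding normal_subgroup_def u_def by metis
    then have u: "invertible u" "act u f = f"
      using \<open>H \<subseteq> G\<close> matrix_group_inverse[OF assms(1)] assms(4)
      unfolding inv_ring_def by auto
    have "t ** s = s ** u"
      by (simp add: u_def matrix_mul_assoc matrix_inv_right[OF s(1)])
    then have "act t (act s f) = act s (act u f)"
      by (simp add: act_act s(1) t u(1))
    then show ?thesis using u(2) by simp
  qed
  moreover have "act s f \<in> polyfun"
    using assms(4) polyfun_act inv_ring_subset_polyfun by blast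
  ultimately show ?thesis unfolding inv_ring_def by auto
qed

lemma reynolds_in_inv_ring:
  assumes "finite G" "matrix_group G" "f \<in> polyfun"
  shows "reynolds G f \<in> inv_ring G"
proof -
  have "reynolds G f \<in> polyfun"
    unfolding reynolds_def
    using polyfun_act[OF assms(3)]
    by (intro polyfun.mult polyfun.const function_subring_sum[OF function_subring_polyfun]) auto
  moreover have "act t (reynolds G f) = reynolds G f" if "t \<in> G" for t
  proof -
    note t = matrix_group_inverse[OF assms(2) \<open>t \<in> G\<close>]
    have "bij_betw (\<lambda>s. t ** s) G G"
    proof (rule bij_betwI[where g = "\<lambda>s. matrix_inv t ** s"])
      show "(\<lambda>s. t ** s) \<in> G \<rightarrow> G" "(\<lambda>s. matrix_inv t ** s) \<in> G \<rightarrow> G"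
        using assms(2) \<open>t \<in> G\<close> t unfolding matrix_group_def by auto
      show "matrix_inv t ** (t ** s) = s" "t ** (matrix_inv t ** s) = s" for s
        by (simp_all add: matrix_mul_assoc matrix_inv_left[OF t(1)] matrix_inv_right[OF t(1)])
    qed
    then have "(\<Sum>s\<in>G. act (t ** s) f x) = (\<Sum>s\<in>G. act s f x)" for x
      by (rule sum.reindex_bij_betw)
    moreover have "act t (act s f) = act (t ** s) f" if "s \<in> G" for s
      using act_act matrix_group_inverse[OF assms(2) that] t(1) by blast
    ultimately show ?thesis
      by (simp add: fun_eq_iff reynolds_def act_def[of t])
  qed
  ultimately show ?thesis unfolding inv_ring_def by auto
qed

lemma ring_hom_on_subset: "ring_hom_on B \<psi> \<Longrightarrow> A \<subseteq> B \<Longrightarrow> ring_hom_on A \<psi>"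
  unfolding ring_hom_on_def by blast

lemma ring_hom_onD:
  assumes "ring_hom_on A \<psi>"
  shows ring_hom_on_one: "\<psi> (\<lambda>x. 1) = 1"
    and ring_hom_on_add: "a \<in> A \<Longrightarrow> b \<in> A \<Longrightarrow> \<psi> (\<lambda>x. a x + b x) = \<psi> a + \<psi> b"
    and ring_hom_on_mult: "a \<in> A \<Longrightarrow> b \<in> A \<Longrightarrow> \<psi> (\<lambda>x. a x * b x) = \<psi> a * \<psi> b"
  using assms unfolding ring_hom_on_def by auto

lemma function_subring_const: "function_subring A \<Longrightarrow> (\<lambda>x. c) \<in> A"
  unfolding function_subring_def by blast

lemma ring_hom_on_zero:
  assumes "ring_hom_on A \<psi>" "function_subring A"
  shows "\<psi> (\<lambda>x. 0) = 0"
  using ring_hom_on_add[OF assms(1), of "\<lambda>x. 0" "\<lambda>x. 0"] function_subring_const[OF assms(2)]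
  by simp

lemma ring_hom_on_sum:
  assumes "ring_hom_on A \<psi>" "function_subring A" "finite S" "\<forall>s\<in>S. F s \<in> A"
  shows "\<psi> (\<lambda>x. \<Sum>s\<in>S. F s x) = (\<Sum>s\<in>S. \<psi> (F s))"
  using assms(3,4)
proof (induction S rule: finite_induct)
  case empty
  then show ?case using ring_hom_on_zero[OF assms(1,2)] by simp
next
  case (insert a S)
  then have "(\<lambda>x. \<Sum>s\<in>S. F s x) \<in> A" by (simp add: function_subring_sum[OF assms(2)])
  then show ?case using insert assms(1) unfolding ring_hom_on_def by simp
qed

lemma ring_hom_on_const_inverse_of_nat:
  assumes "ring_hom_on A \<psi>" "function_subring A"
  shows "\<psi> (\<lambda>x. 1 / of_nat m) = 1 / of_nat m"
proof (cases "m = 0")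
  case True
  then show ?thesis using ring_hom_on_zero[OF assms] by simp
next
  case False
  note const = function_subring_const[OF assms(2)]
  have "\<psi> (\<lambda>x. of_nat m) = of_nat m"
    using ring_hom_on_sum[OF assms finite_lessThan, where F = "\<lambda>_ x. 1"]
    by (simp add: const ring_hom_on_one[OF assms(1)])
  moreover have "\<psi> (\<lambda>x. of_nat m * (1 / of_nat m)) = \<psi> (\<lambda>x. of_nat m) * \<psi> (\<lambda>x. 1 / of_nat m)"
    using ring_hom_on_mult[OF assms(1) const const] .
  ultimately show ?thesis using False ring_hom_on_one[OF assms(1)] by (simp add: field_simps)
qed

lemma ring_hom_on_reynolds:
  assumes "ring_hom_on A \<psi>" "function_subring A" "finite G" "\<forall>s\<in>G. act s f \<in> A"
  shows "\<psi> (reynolds G f) = (\<Sum>s\<in>G. \<psi> (act s f)) / real (card G)"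
  using ring_hom_on_mult[OF assms(1) function_subring_const[OF assms(2)]
      function_subring_sum[OF assms(2,4)], of "1 / real (card G)"]
  by (simp add: reynolds_def ring_hom_on_const_inverse_of_nat[OF assms(1,2)]
      ring_hom_on_sum[OF assms])

lemma ring_hom_on_act:
  assumes "ring_hom_on A \<psi>" "\<forall>f\<in>B. act s f \<in> A"
  shows "ring_hom_on B (\<lambda>f. \<psi> (act s f))"
proof -
  have "act s (\<lambda>x. f x + g x) = (\<lambda>x. act s f x + act s g x)"
    "act s (\<lambda>x. f x * g x) = (\<lambda>x. act s f x * act s g x)"
    "act s (\<lambda>x. 1) = (\<lambda>x. 1)" for f g
    by (simp_all add: act_def)
  then show ?thesis using assms unfolding ring_hom_on_def by simp
qed

lemma extends_hom_restrict:
  "extends_hom A C \<phi> \<Longrightarrow> B \<subseteq> C \<Longrightarrow> extends_hom A B \<phi>"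
  unfolding extends_hom_def using ring_hom_on_subset by blast

lemma extends_hom_cong:
  "extends_hom A C \<psi> \<Longrightarrow> \<forall>a\<in>A. \<psi> a = \<phi> a \<Longrightarrow> extends_hom A C \<phi>"
  unfolding extends_hom_def by auto

lemma extends_hom_antimono:
  "extends_hom A C \<phi> \<Longrightarrow> A' \<subseteq> A \<Longrightarrow> extends_hom A' C \<phi>"
  unfolding extends_hom_def by blast

lemma ex_nonneg_if_mean_nonneg:
  fixes f :: "'a \<Rightarrow> real"
  assumes "finite S" "S \<noteq> {}" "(\<Sum>s\<in>S. f s) / real (card S) \<ge> 0"
  shows "\<exists>s\<in>S. f s \<ge> 0"
proof (rule ccontr)
  assume "\<not> (\<exists>s\<in>S. f s \<ge> 0)"
  then have "\<forall>s\<in>S. f s < 0" by auto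
  then have "(\<Sum>s\<in>S. f s) < 0"
    using sum_strict_mono[OF assms(1,2), of f "\<lambda>_. 0"] by simp
  moreover have "card S > 0" using assms(1,2) by (simp add: card_gt_0_iff)
  ultimately have "(\<Sum>s\<in>S. f s) / real (card S) < 0" by (simp add: divide_neg_pos)
  with assms(3) show False by linarith
qed

lemma reynolds_nonneg_if_extends:
  assumes "finite G" "h \<in> polyfun"
    and extends_imp_nonneg: "\<forall>\<psi>. ring_hom_on (inv_ring H) \<psi> \<longrightarrow>
          extends_hom (inv_ring H) polyfun \<psi> \<longrightarrow> \<psi> h \<ge> 0"
    and \<Phi>: "ring_hom_on polyfun \<Phi>"
  shows "\<Phi> (reynolds G h) \<ge> 0"
proof -
  have "\<Phi> (act s h) \<ge> 0" for s
  proof -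
    have "ring_hom_on polyfun (\<lambda>f. \<Phi> (act s f))"
      using ring_hom_on_act[OF \<Phi>] polyfun_act by blast
    then have "ring_hom_on (inv_ring H) (\<lambda>f. \<Phi> (act s f))"
      and "extends_hom (inv_ring H) polyfun (\<lambda>f. \<Phi> (act s f))"
      using ring_hom_on_subset[OF _ inv_ring_subset_polyfun] unfolding extends_hom_def by blast+
    then show ?thesis using extends_imp_nonneg by blast
  qed
  then show ?thesis
    using ring_hom_on_reynolds[OF \<Phi> function_subring_polyfun assms(1)] polyfun_act[OF assms(2)]
    by (simp add: sum_nonneg)
qed

lemma extends_if_reynolds_nonneg:
  assumes "finite G" "matrix_group G" "normal_subgroup H G" "h \<in> inv_ring H"
    and nonneg_imp_extends: "\<forall>\<psi>. ring_hom_on (inv_ring H) \<psi> \<longrightarrow>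
          \<psi> h \<ge> 0 \<longrightarrow> extends_hom (inv_ring H) polyfun \<psi>"
    and \<psi>: "ring_hom_on (inv_ring H) \<psi>" "\<psi> (reynolds G h) \<ge> 0"
  shows "extends_hom (inv_ring G) polyfun \<psi>"
proof -
  have act_H: "act s f \<in> inv_ring H" if "s \<in> G" "f \<in> inv_ring H" for s f
    using act_inv_ring_normal_subgroup[OF assms(2,3) that] .
  have "G \<noteq> {}" using assms(2) unfolding matrix_group_def by auto
  moreover have "\<psi> (reynolds G h) = (\<Sum>s\<in>G. \<psi> (act s h)) / real (card G)"
    using ring_hom_on_reynolds[OF \<psi>(1) function_subring_inv_ring assms(1)] act_H assms(4)
    by blast
  ultimately have "\<exists>s\<in>G. \<psi> (act s h) \<ge> 0"
    using ex_nonneg_if_mean_nonneg[OF assms(1), of "\<lambda>s. \<psi> (act s h)"] \<psi>(2) by simp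
  then obtain s where "s \<in> G" "\<psi> (act s h) \<ge> 0" by blast
  moreover have "ring_hom_on (inv_ring H) (\<lambda>f. \<psi> (act s f))"
    using ring_hom_on_act[OF \<psi>(1)] act_H \<open>s \<in> G\<close> by blast
  ultimately have "extends_hom (inv_ring H) polyfun (\<lambda>f. \<psi> (act s f))"
    using nonneg_imp_extends by blast
  then have "extends_hom (inv_ring G) polyfun (\<lambda>f. \<psi> (act s f))"
    using extends_hom_antimono inv_ring_antimono assms(3) unfolding normal_subgroup_def
    by blast
  moreover have "\<forall>a\<in>inv_ring G. \<psi> (act s a) = \<psi> a"
    using \<open>s \<in> G\<close> unfolding inv_ring_def by auto
  ultimately show ?thesis by (rule extends_hom_cong)
qed

lemma extends_hom_polyfun_iff_reynolds_nonneg: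
  assumes "finite G" "matrix_group G" "normal_subgroup H G" "h \<in> inv_ring H"
    and H_extends_iff: "\<forall>\<psi>. ring_hom_on (inv_ring H) \<psi> \<longrightarrow>
          (extends_hom (inv_ring H) polyfun \<psi> \<longleftrightarrow> \<psi> h \<ge> 0)"
  shows "extends_hom (inv_ring G) polyfun \<phi> \<longleftrightarrow>
    extends_hom (inv_ring G) (inv_ring H) \<phi> \<and> \<phi> (reynolds G h) \<ge> 0"
proof -
  have h: "h \<in> polyfun" using assms(4) inv_ring_subset_polyfun by blast
  have R: "reynolds G h \<in> inv_ring G" using reynolds_in_inv_ring[OF assms(1,2) h] .
  show ?thesis
  proof
    assume "extends_hom (inv_ring G) polyfun \<phi>"
    then obtain \<Phi> where "ring_hom_on polyfun \<Phi>" "\<forall>a\<in>inv_ring G. \<Phi> a = \<phi> a"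
      unfolding extends_hom_def by blast
    then show "extends_hom (inv_ring G) (inv_ring H) \<phi> \<and> \<phi> (reynolds G h) \<ge> 0"
      using extends_hom_restrict[OF _ inv_ring_subset_polyfun] R
        reynolds_nonneg_if_extends[OF assms(1) h] H_extends_iff
      unfolding extends_hom_def by metis
  next
    assume "extends_hom (inv_ring G) (inv_ring H) \<phi> \<and> \<phi> (reynolds G h) \<ge> 0"
    then obtain \<psi> where "ring_hom_on (inv_ring H) \<psi>" "\<forall>a\<in>inv_ring G. \<psi> a = \<phi> a"
      and "\<psi> (reynolds G h) \<ge> 0"
      using R unfolding extends_hom_def by auto
    then show "extends_hom (inv_ring G) polyfun \<phi>"
      using extends_if_reynolds_nonneg[OF assms(1-4)] H_extends_iff extends_hom_cong by blast
  qed
qed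

theorem lemma3p15:
  fixes G H :: "(real^'n^'n) set" and k :: nat
    and g :: "nat \<Rightarrow> (real^'n \<Rightarrow> real)" and h :: "real^'n \<Rightarrow> real"
  assumes "finite G" and "matrix_group G" and "normal_subgroup H G"
    and "\<forall>i<k. g i \<in> inv_ring G"
    and "\<forall>\<phi>. ring_hom_on (inv_ring G) \<phi> \<longrightarrow>
           (extends_hom (inv_ring G) (inv_ring H) \<phi> \<longleftrightarrow> (\<forall>i<k. \<phi> (g i) \<ge> 0))"
    and "h \<in> inv_ring H"
    and "\<forall>\<phi>. ring_hom_on (inv_ring H) \<phi> \<longrightarrow>
           (extends_hom (inv_ring H) polyfun \<phi> \<longleftrightarrow> \<phi> h \<ge> 0)"
  shows "\<forall>\<phi>. ring_hom_on (inv_ring G) \<phi> \<longrightarrow>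
           (extends_hom (inv_ring G) polyfun \<phi> \<longleftrightarrow>
              \<phi> (reynolds G h) \<ge> 0 \<and> (\<forall>i<k. \<phi> (g i) \<ge> 0))"
  using extends_hom_polyfun_iff_reynolds_nonneg[OF assms(1,2,3,6,7)] assms(5) by blast

end
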